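(* If $\phi\in C(\mathbb{Z}_p,\mathbb{C}_p)$ and $y,s\in\mathbb{Z}_p$, then $T(S^y(\phi))(s)=T(\phi)(s+y)$.
   Context: Fix a prime $p$. $\mathbb{C}_p$ denotes the completion of an algebraic closure of $\mathbb{Q}_p$, with absolute value $|\cdot|$ normalized by $|p|=1/p$. $C(\mathbb{Z}_p,\mathbb{C}_p)$ is the $\mathbb{C}_p$-Banach space of continuous functions $\mathbb{Z}_p\to\mathbb{C}_p$ with the sup-norm $\|\cdot\|$. For $n\in\mathbb{Z}_{\ge0}$ and $x\in\mathbb{Z}_p$, $\binom{x}{n}=x(x-1)\cdots(x-n+1)/n!$. For $y\in\mathbb{Z}_p$ and $\phi\in C(\mathbb{Z}_p,\mathbb{C}_p)$ define $S^y(\phi)\in C(\mathbb{Z}_p,\mathbb{C}_p)$ by $S^y(\phi)(x)=\sum_{k\ge0}(-1)^k k!\binom yk\binom xk\phi(x-k)$. Define $T(\phi):\mathbb{Z}_p\to\mathbb{C}_p$ by $T(\phi)(y)=S^y(\phi)(-1)=\sum_{k\ge0}k!\,\phi(-1-k)\binom{y}{k}$. *)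

theory Defs
  imports "HOL-Analysis.Analysis" "HOL-Computational_Algebra.Polynomial"
begin

text \<open>Abstract model of C_p: a complete, algebraically closed field of characteristic 0
  with a non-archimedean absolute value inducing its metric, in which the algebraic
  numbers (roots of nonzero integer polynomials) are dense.  Together with the
  normalisation |p| = 1/p (imposed in the theorem) such a field is isometrically
  isomorphic to C_p.\<close>

class cp_field = field_char_0 + complete_space +
  fixes vabs :: "'a \<Rightarrow> real"
  assumes dist_vabs: "dist x y = vabs (x - y)"
    and vabs_eq_0: "vabs x = 0 \<longleftrightarrow> x = 0"
    and vabs_mult: "vabs (x * y) = vabs x * vabs y"
    and vabs_ultra: "vabs (x + y) \<le> max (vabs x) (vabs y)"
    and alg_closed: "n > 0 \<Longrightarrow> \<exists>z. z ^ n + (\<Sum>i<n. c i * z ^ i) = 0"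
    and alg_dense: "e > 0 \<Longrightarrow> \<exists>z n (q :: nat \<Rightarrow> int). q n \<noteq> 0 \<and> (\<Sum>i\<le>n. of_int (q i) * z ^ i) = 0 \<and> dist z x < e"

definition Zp :: "'a::cp_field set" where
  "Zp = closure (range of_int)"

definition S_op :: "'a::cp_field \<Rightarrow> ('a \<Rightarrow> 'a) \<Rightarrow> 'a \<Rightarrow> 'a" where
  "S_op y \<phi> x = (\<Sum>k. (-1) ^ k * fact k * (y gchoose k) * (x gchoose k) * \<phi> (x - of_nat k))"

definition T_op :: "('a::cp_field \<Rightarrow> 'a) \<Rightarrow> 'a \<Rightarrow> 'a" where
  "T_op \<phi> y = S_op y \<phi> (-1)"

end

theory Submission
  imports Defs
begin

text \<open>Expanding both operators, \<open>T(S\<^sup>y \<phi>)(s)\<close> becomes the double series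
  \<open>\<Sum>\<^sub>n \<Sum>\<^sub>k (n+k)! (s choose n) (y choose k) \<phi>(-1-n-k)\<close>.  Binomial coefficients are bounded
  by 1 on \<open>\<int>\<^sub>p\<close>, \<open>\<phi>\<close> is bounded because \<open>\<int>\<^sub>p\<close> is compact, and \<open>|m!| \<rightarrow> 0\<close>; so the terms
  tend to 0 uniformly in \<open>n + k\<close> and, the absolute value being non-archimedean, the series
  may be summed along the diagonals \<open>n + k = m\<close>.  Vandermonde's identity collapses the
  \<open>m\<close>-th diagonal to \<open>m! (s+y choose m) \<phi>(-1-m)\<close>, the \<open>m\<close>-th term of \<open>T(\<phi>)(s+y)\<close>.\<close>

lemma vabs_nonneg: "0 \<le> vabs (x::'a::cp_field)"
  by (metis dist_vabs diff_zero zero_le_dist)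

lemma vabs_0 [simp]: "vabs (0::'a::cp_field) = 0"
  by (simp add: vabs_eq_0)

lemma vabs_1 [simp]: "vabs (1::'a::cp_field) = 1"
proof -
  have "vabs (1::'a) * vabs (1::'a) = vabs (1::'a)"
    using vabs_mult[of "1::'a" 1] by (simp only: mult_1)
  moreover have "vabs (1::'a) \<noteq> 0"
    by (simp add: vabs_eq_0)
  ultimately show ?thesis by simp
qed

lemma vabs_minus [simp]: "vabs (- x) = vabs (x::'a::cp_field)"
proof -
  have "vabs (-1::'a) * vabs (-1::'a) = 1"
    using vabs_mult[of "-1::'a" "-1"] by simp
  then have "vabs (-1::'a) = 1"
    using vabs_nonneg[of "-1::'a"] by (metis abs_of_nonneg abs_square_eq_1 power2_eq_square)
  then show ?thesis
    using vabs_mult[of "-1::'a" x] by simp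
qed

lemma vabs_minus_commute: "vabs (x - y) = vabs (y - (x::'a::cp_field))"
  by (metis minus_diff_eq vabs_minus)

lemma dist_0_vabs: "dist 0 x = vabs (x::'a::cp_field)"
  by (simp add: dist_vabs)

lemma vabs_power: "vabs (x ^ n) = vabs (x::'a::cp_field) ^ n"
  by (induction n) (simp_all add: vabs_mult)

lemma vabs_prod: "vabs (prod f A) = (\<Prod>i\<in>A. vabs (f i :: 'a::cp_field))"
  by (induction A rule: infinite_finite_induct) (simp_all add: vabs_mult)

lemma dist_le_max_dist: "dist x z \<le> max (dist x y) (dist y (z::'a::cp_field))"
  using vabs_ultra[of "x - y" "y - z"] by (simp add: dist_vabs)

lemma vabs_add_le: "vabs x \<le> B \<Longrightarrow> vabs y \<le> B \<Longrightarrow> vabs (x + y :: 'a::cp_field) \<le> B"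
  by (rule order_trans[OF vabs_ultra]) simp

lemma vabs_diff_le: "vabs x \<le> B \<Longrightarrow> vabs y \<le> B \<Longrightarrow> vabs (x - y :: 'a::cp_field) \<le> B"
  using vabs_add_le[of x B "- y"] by simp

lemma vabs_mult_le: "vabs x \<le> 1 \<Longrightarrow> vabs y \<le> B \<Longrightarrow> vabs (x * y :: 'a::cp_field) \<le> B"
  unfolding vabs_mult by (rule order_trans[OF mult_left_le_one_le[OF vabs_nonneg vabs_nonneg]])

lemma vabs_sum_le:
  assumes "0 \<le> B" "\<And>i. i \<in> A \<Longrightarrow> vabs (f i :: 'a::cp_field) \<le> B"
  shows "vabs (sum f A) \<le> B"
  using assms(2)
proof (induction A rule: infinite_finite_induct)
  case (insert x F)
  then show ?case
    by (simp add: vabs_add_le)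
qed (use assms(1) in simp_all)

lemma vabs_of_nat_le_1: "vabs (of_nat n :: 'a::cp_field) \<le> 1"
proof (induction n)
  case (Suc n)
  then show ?case
    by (simp add: vabs_add_le)
qed simp

lemma vabs_of_int_le_1: "vabs (of_int z :: 'a::cp_field) \<le> 1"
  by (metis of_int_of_nat vabs_minus vabs_of_nat_le_1)

lemma vabs_fact_antimono: "m \<le> n \<Longrightarrow> vabs (fact n :: 'a::cp_field) \<le> vabs (fact m :: 'a)"
proof (induction n rule: dec_induct)
  case (step n)
  have "vabs (fact (Suc n) :: 'a) = vabs (of_nat (Suc n) :: 'a) * vabs (fact n :: 'a)"
    by (simp add: vabs_mult del: of_nat_Suc)
  also have "\<dots> \<le> vabs (fact n :: 'a)"
    by (rule mult_left_le_one_le[OF vabs_nonneg vabs_nonneg vabs_of_nat_le_1])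
  finally show ?case
    using step.IH by simp
qed simp

lemma tendsto_mult_left_cp:
  fixes f :: "'b \<Rightarrow> 'a::cp_field"
  assumes "(f \<longlongrightarrow> l) F"
  shows "((\<lambda>x. c * f x) \<longlongrightarrow> c * l) F"
proof -
  have "dist (c * f x) (c * l) = vabs c * dist (f x) l" for x
    by (simp add: dist_vabs vabs_mult flip: right_diff_distrib)
  moreover have "((\<lambda>x. vabs c * dist (f x) l) \<longlongrightarrow> vabs c * 0) F"
    using assms unfolding tendsto_dist_iff[of f] by (intro tendsto_mult tendsto_const)
  ultimately show ?thesis
    unfolding tendsto_dist_iff[of _ "c * l"] by simp
qed

lemma sums_mult_cp:
  fixes f :: "nat \<Rightarrow> 'a::cp_field"
  shows "f sums l \<Longrightarrow> (\<lambda>n. c * f n) sums (c * l)"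
  unfolding sums_def by (simp add: tendsto_mult_left_cp flip: sum_distrib_left)

lemma sum_lessThan_diff:
  fixes f :: "nat \<Rightarrow> 'a::ab_group_add"
  shows "n \<le> m \<Longrightarrow> sum f {..<m} - sum f {..<n} = sum f {n..<m}"
  using sum_diff_nat_ivl[of 0 n m f] by (simp add: lessThan_atLeast0)

lemma summable_null_comparison_cp:
  fixes f :: "nat \<Rightarrow> 'a::cp_field"
  assumes bound: "\<And>n. vabs (f n) \<le> g n" and "g \<longlonglongrightarrow> 0"
  shows "summable f"
proof -
  have "Cauchy (\<lambda>n. sum f {..<n})"
  proof (rule metric_CauchyI)
    fix e :: real
    assume "e > 0"
    then obtain N where N: "\<And>n. n \<ge> N \<Longrightarrow> g n < e / 2"
      using LIMSEQ_D[OF \<open>g \<longlonglongrightarrow> 0\<close>, of "e / 2"] by (force simp: abs_less_iff)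
    have small: "dist (sum f {..<m}) (sum f {..<n}) < e" if "N \<le> n" "n \<le> m" for m n
    proof -
      have "vabs (f i) \<le> e / 2" if "n \<le> i" for i
        using bound[of i] N[of i] that \<open>N \<le> n\<close> by simp
      then have "vabs (sum f {n..<m}) \<le> e / 2"
        using \<open>e > 0\<close> by (intro vabs_sum_le) auto
      moreover have "dist (sum f {..<m}) (sum f {..<n}) = vabs (sum f {n..<m})"
        by (simp only: dist_vabs sum_lessThan_diff[OF \<open>n \<le> m\<close>])
      ultimately show ?thesis
        using \<open>e > 0\<close> by simp
    qed
    have "dist (sum f {..<m}) (sum f {..<n}) < e" if "N \<le> m" "N \<le> n" for m n
    proof (cases "n \<le> m")
      case False
      then show ?thesis
        using small[of m n] that by (simp add: dist_commute)
    qed (use small that in blast)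
    then show "\<exists>N. \<forall>m\<ge>N. \<forall>n\<ge>N. dist (sum f {..<m}) (sum f {..<n}) < e"
      by blast
  qed
  then show ?thesis
    unfolding summable_def sums_def by (metis Cauchy_convergent_iff convergent_def)
qed

lemma vabs_suminf_minus_sum_le:
  fixes f :: "nat \<Rightarrow> 'a::cp_field"
  assumes "summable f" and bound: "\<And>k. k \<ge> N \<Longrightarrow> vabs (f k) \<le> B"
  shows "vabs (suminf f - sum f {..<N}) \<le> B"
proof -
  have "0 \<le> B"
    using bound[of N] vabs_nonneg[of "f N"] by simp
  have "(\<lambda>n. dist (sum f {..<n}) (sum f {..<N})) \<longlonglongrightarrow> dist (suminf f) (sum f {..<N})"
    using summable_sums[OF assms(1)] unfolding sums_def by (intro tendsto_intros)
  moreover have "\<forall>n\<ge>N. dist (sum f {..<n}) (sum f {..<N}) \<le> B"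
    using \<open>0 \<le> B\<close> bound by (auto simp: dist_vabs sum_lessThan_diff intro!: vabs_sum_le)
  ultimately have "dist (suminf f) (sum f {..<N}) \<le> B"
    by (rule Lim_bounded)
  then show ?thesis
    by (simp add: dist_vabs)
qed

lemma sum_diagonals_eq_sum_rows:
  fixes a :: "nat \<Rightarrow> nat \<Rightarrow> 'a::comm_monoid_add"
  shows "(\<Sum>m<N. \<Sum>i\<le>m. a i (m - i)) = (\<Sum>n<N. \<Sum>k<N - n. a n k)"
proof -
  have "(\<Sum>m<N. \<Sum>i\<le>m. a i (m - i)) = (\<Sum>(i, j)\<in>{(i, j). i + j < N}. a i j)"
    by (rule sum.triangle_reindex[symmetric])
  also have "{(i, j). i + j < N} = Sigma {..<N} (\<lambda>i. {..<N - i})"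
    by auto
  finally show ?thesis
    by (simp add: sum.Sigma)
qed

lemma tendsto_by_dist_le_null:
  fixes f g :: "nat \<Rightarrow> 'a::metric_space"
  assumes "g \<longlonglongrightarrow> l" "\<And>n. dist (f n) (g n) \<le> E n" "E \<longlonglongrightarrow> 0"
  shows "f \<longlonglongrightarrow> l"
proof -
  have "(\<lambda>n. dist (g n) l) \<longlonglongrightarrow> 0"
    using assms(1) by (simp only: tendsto_dist_iff[of g l])
  from tendsto_add[OF assms(3) this] have majorant_null: "(\<lambda>n. E n + dist (g n) l) \<longlonglongrightarrow> 0"
    by simp
  have "\<forall>n. norm (dist (f n) l) \<le> E n + dist (g n) l"
  proof
    fix n
    show "norm (dist (f n) l) \<le> E n + dist (g n) l"
      using dist_triangle[of "f n" l "g n"] assms(2)[of n] by simp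
  qed
  from Lim_null_comparison[OF always_eventually[OF this] majorant_null] show ?thesis
    by (simp only: tendsto_dist_iff[of f l])
qed

text \<open>The triangle \<open>n + k < N\<close> differs from the first \<open>N\<close> rows only by row tails, each of
  which is bounded by \<open>E N\<close>.\<close>

lemma sums_diagonal_cp:
  fixes a :: "nat \<Rightarrow> nat \<Rightarrow> 'a::cp_field" and E :: "nat \<Rightarrow> real"
  assumes bound: "\<And>n k. vabs (a n k) \<le> E (n + k)"
    and E_antimono: "antimono E" and "E \<longlonglongrightarrow> 0"
  shows "(\<lambda>n. \<Sum>k. a n k) sums (\<Sum>m. \<Sum>i\<le>m. a i (m - i))"
proof -
  define d where "d m = (\<Sum>i\<le>m. a i (m - i))" for m
  have E_nonneg: "0 \<le> E m" for m
    using bound[of m 0] vabs_nonneg[of "a m 0"] by simp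
  have E_le: "E n \<le> E m" if "m \<le> n" for m n
    using E_antimono that by (simp add: antimono_def)
  have "vabs (d m) \<le> E m" for m
  proof -
    have "vabs (a i (m - i)) \<le> E m" if "i \<le> m" for i
      using bound[of i "m - i"] that by simp
    then show ?thesis
      unfolding d_def by (intro vabs_sum_le E_nonneg) auto
  qed
  then have "summable d"
    using summable_null_comparison_cp \<open>E \<longlonglongrightarrow> 0\<close> by blast
  then have d_sums: "(\<lambda>N. sum d {..<N}) \<longlonglongrightarrow> suminf d"
    using summable_sums unfolding sums_def by blast
  have rows_summable: "summable (a n)" for n
  proof -
    have "vabs (a n k) \<le> E k" for k
      using bound[of n k] E_le[of k "n + k"] by simp
    then show ?thesis
      using summable_null_comparison_cp \<open>E \<longlonglongrightarrow> 0\<close> by blast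
  qed
  have row_tails: "dist (\<Sum>n<N. \<Sum>k. a n k) (sum d {..<N}) \<le> E N" for N
    unfolding dist_vabs sum_diagonals_eq_sum_rows[of a N, folded d_def] sum_subtractf[symmetric]
  proof (intro vabs_sum_le E_nonneg vabs_suminf_minus_sum_le rows_summable)
    fix n k
    assume "n \<in> {..<N}" "N - n \<le> k"
    then have "N \<le> n + k"
      by arith
    then show "vabs (a n k) \<le> E N"
      using bound[of n k] E_le[of N "n + k"] by simp
  qed
  from d_sums row_tails \<open>E \<longlonglongrightarrow> 0\<close> show ?thesis
    unfolding sums_def d_def[symmetric] by (rule tendsto_by_dist_le_null)
qed

lemma vabs_fact_mult_le_power:
  assumes "p > 0"
  shows "vabs (fact (q * p) :: 'a::cp_field) \<le> vabs (of_nat p :: 'a) ^ q"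
proof (induction q)
  case (Suc q)
  have "Suc q * p = Suc (q * p + (p - 1))"
    using assms by simp
  then have "(fact (Suc q * p) :: 'a) = of_nat (Suc q * p) * fact (q * p + (p - 1))"
    by (simp only: fact_Suc)
  then have "vabs (fact (Suc q * p) :: 'a)
      = vabs (of_nat (Suc q) :: 'a) * (vabs (of_nat p :: 'a) * vabs (fact (q * p + (p - 1)) :: 'a))"
    by (simp only: vabs_mult of_nat_mult mult.assoc)
  also have "\<dots> \<le> vabs (of_nat p :: 'a) * vabs (fact (q * p + (p - 1)) :: 'a)"
    by (rule mult_left_le_one_le[OF _ vabs_nonneg vabs_of_nat_le_1]) (simp add: vabs_nonneg)
  also have "\<dots> \<le> vabs (of_nat p :: 'a) * vabs (fact (q * p) :: 'a)"
    by (rule mult_left_mono[OF vabs_fact_antimono vabs_nonneg]) simp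
  also have "\<dots> \<le> vabs (of_nat p :: 'a) * vabs (of_nat p :: 'a) ^ q"
    by (rule mult_left_mono[OF Suc.IH vabs_nonneg])
  finally show ?case
    by simp
qed simp

lemma vabs_fact_tendsto_0:
  assumes "p > 0" "vabs (of_nat p :: 'a::cp_field) < 1"
  shows "(\<lambda>n. vabs (fact n :: 'a)) \<longlonglongrightarrow> 0"
proof (rule LIMSEQ_I)
  fix e :: real
  assume "e > 0"
  then obtain q where q: "vabs (of_nat p :: 'a) ^ q < e"
    using real_arch_pow_inv assms(2) by blast
  have "vabs (fact n :: 'a) < e" if "q * p \<le> n" for n
    using vabs_fact_antimono[OF that, where 'a='a] vabs_fact_mult_le_power[OF assms(1), of q, where 'a='a] q
    by linarith
  then show "\<exists>N. \<forall>n\<ge>N. norm (vabs (fact n :: 'a) - 0) < e"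
    by (intro exI[of _ "q * p"]) (simp add: abs_of_nonneg vabs_nonneg)
qed

lemma of_int_in_Zp: "(of_int z :: 'a::cp_field) \<in> Zp"
  unfolding Zp_def by (rule closure_subset[THEN subsetD]) (rule rangeI)

lemma vabs_le_1_if_in_Zp: "x \<in> Zp \<Longrightarrow> vabs (x::'a::cp_field) \<le> 1"
proof -
  have "closure (range of_int) \<subseteq> cball (0::'a) 1"
    by (rule closure_minimal) (auto simp: dist_0_vabs vabs_of_int_le_1)
  then show "x \<in> Zp \<Longrightarrow> vabs x \<le> 1"
    unfolding Zp_def by (auto simp: dist_0_vabs)
qed

lemma vabs_prod_diff_le:
  fixes f g :: "nat \<Rightarrow> 'a::cp_field"
  assumes "0 \<le> B" "\<And>i. vabs (f i) \<le> 1" "\<And>i. vabs (g i) \<le> 1" "\<And>i. vabs (f i - g i) \<le> B"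
  shows "vabs (prod f {..<n} - prod g {..<n}) \<le> B"
proof (induction n)
  case (Suc n)
  have "prod f {..<Suc n} - prod g {..<Suc n}
      = f n * (prod f {..<n} - prod g {..<n}) + (f n - g n) * prod g {..<n}"
    by (simp add: algebra_simps)
  moreover have "vabs (f n * (prod f {..<n} - prod g {..<n})) \<le> B"
    by (rule vabs_mult_le[OF assms(2) Suc.IH])
  moreover have "vabs (prod g {..<n} * (f n - g n)) \<le> B"
    by (rule vabs_mult_le[OF _ assms(4)]) (simp add: vabs_prod assms(3) prod_le_1 vabs_nonneg)
  ultimately show ?case
    by (simp add: vabs_add_le mult.commute)
qed (simp add: assms(1))

lemma vabs_gchoose_int_le_1: "vabs ((of_int z :: 'a::cp_field) gchoose k) \<le> 1"
proof (cases "z \<ge> 0")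
  case True
  then have "(of_int z :: 'a) gchoose k = of_nat (nat z choose k)"
    by (simp add: binomial_gbinomial)
  then show ?thesis
    using vabs_of_nat_le_1 by metis
next
  case False
  then have "of_nat k - of_int z - 1 = (of_nat (nat (int k - z - 1)) :: 'a)"
    by simp
  then have "(of_int z :: 'a) gchoose k = (-1) ^ k * of_nat (nat (int k - z - 1) choose k)"
    by (simp add: gbinomial_negated_upper[of "of_int z"] binomial_gbinomial)
  then show ?thesis
    by (simp add: vabs_mult vabs_power vabs_of_nat_le_1)
qed

text \<open>Approximate \<open>x\<close> by an integer to within \<open>|k!|\<close>: since the falling factorial is
  1-Lipschitz on the unit ball, the two binomial coefficients differ by less than 1.\<close>

lemma vabs_gchoose_le_1:
  assumes "x \<in> Zp"
  shows "vabs ((x::'a::cp_field) gchoose k) \<le> 1"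
proof -
  have fact_pos: "vabs (fact k :: 'a) > 0"
    using vabs_nonneg[of "fact k :: 'a"] vabs_eq_0[of "fact k :: 'a"] by simp
  obtain z where z: "dist (of_int z) x < vabs (fact k :: 'a)"
    using assms fact_pos unfolding Zp_def closure_approachable by blast
  have shift_le_1: "vabs (w - of_nat i) \<le> 1" if "vabs w \<le> 1" for w :: 'a and i
    using that vabs_of_nat_le_1 by (rule vabs_diff_le)
  have "vabs (fact k :: 'a) * vabs ((x gchoose k) - (of_int z gchoose k))
      = vabs ((\<Prod>i<k. x - of_nat i) - (\<Prod>i<k. of_int z - of_nat i))"
    unfolding vabs_mult[symmetric] right_diff_distrib gbinomial_mult_fact atLeast0LessThan ..
  also have "\<dots> \<le> vabs (x - of_int z)"
    using vabs_le_1_if_in_Zp[OF assms] vabs_of_int_le_1[of z]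
    by (intro vabs_prod_diff_le shift_le_1) (simp_all add: vabs_nonneg)
  also have "\<dots> < vabs (fact k :: 'a)"
    using z by (simp add: dist_vabs vabs_minus_commute)
  finally have "vabs ((x gchoose k) - (of_int z gchoose k)) < 1"
    using fact_pos by simp
  then show ?thesis
    using vabs_add_le[of "(x gchoose k) - (of_int z gchoose k)" 1 "of_int z gchoose k"]
      vabs_gchoose_int_le_1[of z k] by simp
qed

text \<open>Totally bounded: every point of \<open>\<int>\<^sub>p\<close> is close to an integer, and every integer is
  within \<open>|p|\<^sup>q\<close> of its residue modulo \<open>p\<^sup>q\<close>.\<close>

lemma compact_Zp:
  assumes "p > 0" "vabs (of_nat p :: 'a::cp_field) < 1"
  shows "compact (Zp :: 'a set)"
  unfolding compact_eq_totally_bounded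
proof (intro conjI allI impI)
  show "complete (Zp :: 'a set)"
    unfolding complete_eq_closed Zp_def by simp
  fix e :: real
  assume "e > 0"
  then obtain q where q: "vabs (of_nat p :: 'a) ^ q < e"
    using real_arch_pow_inv assms(2) by blast
  define P where "P = int p ^ q"
  have "P > 0"
    using assms(1) by (simp add: P_def)
  have "\<exists>r\<in>{0..<P}. dist (of_int r) x < e" if "x \<in> Zp" for x :: 'a
  proof -
    obtain z where z: "dist (of_int z) x < e"
      using \<open>x \<in> Zp\<close> \<open>e > 0\<close> unfolding Zp_def closure_approachable by blast
    have "z - z mod P = P * (z div P)"
      by (rule minus_mod_eq_mult_div)
    then have "(of_int z :: 'a) - of_int (z mod P) = of_nat p ^ q * of_int (z div P)"
      unfolding P_def by (metis of_int_diff of_int_mult of_int_of_nat_eq of_int_power)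
    then have "dist (of_int (z mod P)) (of_int z :: 'a)
        = vabs (of_nat p :: 'a) ^ q * vabs (of_int (z div P) :: 'a)"
      by (simp only: dist_vabs vabs_minus_commute[of "of_int (z mod P)"] vabs_mult vabs_power)
    also have "\<dots> \<le> vabs (of_nat p :: 'a) ^ q"
      by (rule mult_right_le_one_le[OF _ vabs_nonneg vabs_of_int_le_1]) (simp add: vabs_nonneg)
    finally have "dist (of_int (z mod P)) x < e"
      using dist_le_max_dist[of "of_int (z mod P)" x "of_int z"] z q by simp
    then show ?thesis
      using \<open>P > 0\<close> by auto
  qed
  then show "\<exists>K. finite K \<and> (Zp :: 'a set) \<subseteq> (\<Union>x\<in>K. ball x e)"
    by (intro exI[of _ "of_int ` {0..<P}"]) (auto simp: dist_commute)
qed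

lemma bounded_on_Zp:
  fixes \<phi> :: "'a::cp_field \<Rightarrow> 'a"
  assumes "p > 0" "vabs (of_nat p :: 'a) < 1" "continuous_on Zp \<phi>"
  obtains M where "\<And>x. x \<in> Zp \<Longrightarrow> vabs (\<phi> x) \<le> M"
proof -
  have "bounded (\<phi> ` Zp)"
    using compact_continuous_image[OF assms(3) compact_Zp[OF assms(1,2)]] by (rule compact_imp_bounded)
  then show ?thesis
    using that unfolding bounded_any_center[where a=0] by (auto simp: dist_0_vabs)
qed

lemma gchoose_minus_one_minus_of_nat:
  "((-1 - of_nat n :: 'a::field_char_0) gchoose k) = (-1) ^ k * of_nat ((n + k) choose k)"
proof -
  have "(of_nat k - (-1 - of_nat n) - 1 :: 'a) = of_nat (n + k)"
    by simp
  then show ?thesis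
    using gbinomial_negated_upper[of "-1 - of_nat n :: 'a" k] by (simp add: binomial_gbinomial add.commute)
qed

lemma T_op_eq_suminf: "T_op \<phi> y = (\<Sum>k. fact k * (y gchoose k) * \<phi> (-1 - of_nat k))"
proof -
  have "((-1 :: 'a) gchoose k) = (-1) ^ k" for k
    using gchoose_minus_one_minus_of_nat[of 0 k, where 'a='a] by simp
  then show ?thesis
    unfolding T_op_def S_op_def by (simp add: mult_ac flip: power_mult_distrib)
qed

lemma vabs_fact_gchoose_mult_le:
  fixes y :: "'a::cp_field"
  assumes "y \<in> Zp" "vabs c \<le> M"
  shows "vabs (fact m * ((y gchoose k) * c)) \<le> vabs (fact m :: 'a) * M"
  unfolding vabs_mult[of "fact m"]
  by (intro mult_left_mono vabs_mult_le vabs_gchoose_le_1 vabs_nonneg assms)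

lemma S_op_at_negative_integer_sums:
  fixes \<phi> :: "'a::cp_field \<Rightarrow> 'a"
  assumes "(\<lambda>k. vabs (fact k :: 'a)) \<longlonglongrightarrow> 0" and "y \<in> Zp"
    and "\<And>k. vabs (\<phi> (-1 - of_nat k)) \<le> M"
  shows "(\<lambda>k. fact (n + k) * ((y gchoose k) * \<phi> (-1 - of_nat (n + k))))
    sums (fact n * S_op y \<phi> (-1 - of_nat n))"
proof -
  define g where "g k = fact (n + k) * ((y gchoose k) * \<phi> (-1 - of_nat (n + k)))" for k
  define h where "h k = (-1) ^ k * fact k * (y gchoose k) * ((-1 - of_nat n) gchoose k)
    * \<phi> (-1 - of_nat n - of_nat k)" for k
  have "vabs (g k) \<le> vabs (fact (n + k) :: 'a) * M" for k
    unfolding g_def using assms(2,3) by (rule vabs_fact_gchoose_mult_le)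
  moreover have "(\<lambda>k. vabs (fact (n + k) :: 'a)) \<longlonglongrightarrow> 0"
    using LIMSEQ_ignore_initial_segment[OF assms(1), of n] by (simp add: add.commute)
  then have "(\<lambda>k. vabs (fact (n + k) :: 'a) * M) \<longlonglongrightarrow> 0"
    by (rule tendsto_mult_left_zero)
  ultimately have g_sums: "g sums suminf g"
    by (intro summable_sums summable_null_comparison_cp)
  have "fact n * h k = g k" for k
  proof -
    have "fact n * h k = ((-1) ^ k * (-1) ^ k) * (fact n * fact k * of_nat ((n + k) choose k))
        * ((y gchoose k) * \<phi> (-1 - of_nat (n + k)))"
      unfolding h_def gchoose_minus_one_minus_of_nat by (simp add: algebra_simps)
    also have "fact n * fact k * of_nat ((n + k) choose k) = (fact (n + k) :: 'a)"
      using arg_cong[OF binomial_fact_lemma[of k "n + k"], of "of_nat :: nat \<Rightarrow> 'a"] by (simp add: mult_ac)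
    finally show ?thesis
      unfolding g_def by (simp flip: power_mult_distrib)
  qed
  then have "h = (\<lambda>k. inverse (fact n) * g k)"
    by (auto simp: field_simps)
  then have "S_op y \<phi> (-1 - of_nat n) = inverse (fact n) * suminf g"
    unfolding S_op_def h_def[symmetric] using sums_unique[OF sums_mult_cp[OF g_sums]] by simp
  then have "fact n * S_op y \<phi> (-1 - of_nat n) = suminf g"
    by (simp add: mult.assoc[symmetric])
  with g_sums show ?thesis
    unfolding g_def by simp
qed

definition TS_term :: "'a::cp_field \<Rightarrow> 'a \<Rightarrow> ('a \<Rightarrow> 'a) \<Rightarrow> nat \<Rightarrow> nat \<Rightarrow> 'a" where
  "TS_term s y \<phi> n k = (s gchoose n) * (fact (n + k) * ((y gchoose k) * \<phi> (-1 - of_nat (n + k))))"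

lemma TS_term_row_sums:
  fixes \<phi> :: "'a::cp_field \<Rightarrow> 'a"
  assumes "(\<lambda>k. vabs (fact k :: 'a)) \<longlonglongrightarrow> 0" and "y \<in> Zp"
    and "\<And>k. vabs (\<phi> (-1 - of_nat k)) \<le> M"
  shows "(\<lambda>k. TS_term s y \<phi> n k) sums (fact n * (s gchoose n) * S_op y \<phi> (-1 - of_nat n))"
  using sums_mult_cp[OF S_op_at_negative_integer_sums[where \<phi>=\<phi>, OF assms], where c="s gchoose n"]
  unfolding TS_term_def by (simp add: mult_ac)

lemma vabs_TS_term_le:
  fixes \<phi> :: "'a::cp_field \<Rightarrow> 'a"
  assumes "s \<in> Zp" "y \<in> Zp" "\<And>k. vabs (\<phi> (-1 - of_nat k)) \<le> M"
  shows "vabs (TS_term s y \<phi> n k) \<le> vabs (fact (n + k) :: 'a) * M"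
  unfolding TS_term_def
  by (rule vabs_mult_le[OF vabs_gchoose_le_1[OF assms(1)] vabs_fact_gchoose_mult_le[OF assms(2,3)]])

lemma TS_term_diagonal_sum:
  "(\<Sum>i\<le>m. TS_term s y \<phi> i (m - i)) = fact m * ((s + y) gchoose m) * \<phi> (-1 - of_nat m)"
proof -
  have "(\<Sum>i\<le>m. TS_term s y \<phi> i (m - i))
      = fact m * \<phi> (-1 - of_nat m) * (\<Sum>i\<le>m. (s gchoose i) * (y gchoose (m - i)))"
    unfolding TS_term_def sum_distrib_left by (intro sum.cong) (auto simp: mult_ac)
  then show ?thesis
    by (simp add: gbinomial_Vandermonde[unfolded atLeast0AtMost] mult_ac)
qed

theorem corollary6p5:
  fixes p :: nat and \<phi> :: "'a::cp_field \<Rightarrow> 'a" and y s :: 'a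
  assumes "prime p"
    and "vabs (of_nat p :: 'a) = 1 / real p"
    and "continuous_on Zp \<phi>"
    and "y \<in> Zp" and "s \<in> Zp"
  shows "T_op (S_op y \<phi>) s = T_op \<phi> (s + y)"
proof -
  have p: "p > 0" "vabs (of_nat p :: 'a) < 1"
    using prime_gt_1_nat[OF assms(1)] assms(2) by auto
  have fact_null: "(\<lambda>n. vabs (fact n :: 'a)) \<longlonglongrightarrow> 0"
    by (rule vabs_fact_tendsto_0[OF p])
  obtain M where "\<And>x. x \<in> Zp \<Longrightarrow> vabs (\<phi> x) \<le> M"
    using bounded_on_Zp[OF p assms(3)] by blast
  then have M: "vabs (\<phi> (-1 - of_nat k)) \<le> M" for k
    using of_int_in_Zp[of "-1 - int k"] by simp
  have "T_op (S_op y \<phi>) s = (\<Sum>n. \<Sum>k. TS_term s y \<phi> n k)"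
    using sums_unique[OF TS_term_row_sums[where \<phi>=\<phi>, OF fact_null assms(4) M]]
    by (simp add: T_op_eq_suminf)
  also have "\<dots> = (\<Sum>m. \<Sum>i\<le>m. TS_term s y \<phi> i (m - i))"
  proof (rule sums_unique[OF sums_diagonal_cp, symmetric])
    show "vabs (TS_term s y \<phi> n k) \<le> vabs (fact (n + k) :: 'a) * M" for n k
      using assms(5,4) M by (rule vabs_TS_term_le)
    show "antimono (\<lambda>m. vabs (fact m :: 'a) * M)"
      using M[of 0] vabs_nonneg[of "\<phi> (-1)"] vabs_fact_antimono
      by (intro antimonoI mult_right_mono) auto
    show "(\<lambda>m. vabs (fact m :: 'a) * M) \<longlonglongrightarrow> 0"
      by (rule tendsto_mult_left_zero[OF fact_null])
  qed
  also have "\<dots> = T_op \<phi> (s + y)"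
    by (simp add: TS_term_diagonal_sum T_op_eq_suminf)
  finally show ?thesis .
qed

end
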